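(* Let $A$ be a JBW algebra with unit $\mathbf{1}$ and let $C\in ASU(A)$. Then $C$ is an atom of the poset $ASU(A)$ if and only if there is a projection $p\in A$ with $p\neq 0$ and $p\neq\mathbf{1}$ such that $C=\operatorname{span}\{p,\mathbf{1}-p\}$.
   Context: A JB algebra is a real Banach algebra $(A,\circ)$ with a commutative product satisfying $a\circ(b\circ a^2)=(a\circ b)\circ a^2$, $\|a^2\|\le\|a^2+b^2\|$, $\|a\|^2=\|a^2\|$; a JBW algebra is a JB algebra that is a dual Banach space (it has a unit $\mathbf{1}$). A projection is an element $p$ with $p\circ p=p$. $ASU(A)$ is the set of all norm-closed associative subalgebras of $A$ containing $\mathbf{1}$, ordered by inclusion; its smallest element is $\mathbb{R}\mathbf{1}$. An atom of a poset with least element $\mathbf{0}$ is an element $x\neq\mathbf{0}$ such that no element lies strictly between $\mathbf{0}$ and $x$. *)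

theory Defs
  imports "HOL-Analysis.Analysis"
begin

definition jb_algebra :: "('a::banach \<Rightarrow> 'a \<Rightarrow> 'a) \<Rightarrow> bool" where
  "jb_algebra jp \<longleftrightarrow>
     bilinear jp \<and>
     (\<forall>a b. norm (jp a b) \<le> norm a * norm b) \<and>
     (\<forall>a b. jp a b = jp b a) \<and>
     (\<forall>a b. jp a (jp b (jp a a)) = jp (jp a b) (jp a a)) \<and>
     (\<forall>a b. norm (jp a a) \<le> norm (jp a a + jp b b)) \<and>
     (\<forall>a. (norm a)\<^sup>2 = norm (jp a a))"

definition is_unit :: "('a \<Rightarrow> 'a \<Rightarrow> 'a) \<Rightarrow> 'a \<Rightarrow> bool" where
  "is_unit jp u \<longleftrightarrow> (\<forall>a. jp u a = a)"

text \<open>T identifies the Banach space with the dual of the Banach space 'b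
  (a surjective linear isometry onto the dual), i.e. 'a is a dual Banach space
  with predual 'b.\<close>
definition dual_space_iso :: "('a::real_normed_vector \<Rightarrow> ('b::banach \<Rightarrow>\<^sub>L real)) \<Rightarrow> bool" where
  "dual_space_iso T \<longleftrightarrow> linear T \<and> bij T \<and> (\<forall>x. norm (T x) = norm x)"

definition is_projection :: "('a \<Rightarrow> 'a \<Rightarrow> 'a) \<Rightarrow> 'a \<Rightarrow> bool" where
  "is_projection jp p \<longleftrightarrow> jp p p = p"

definition ASU :: "('a::real_normed_vector \<Rightarrow> 'a \<Rightarrow> 'a) \<Rightarrow> 'a \<Rightarrow> 'a set set" where
  "ASU jp u = {C. subspace C \<and> closed C \<and> u \<in> C \<and>
                  (\<forall>a\<in>C. \<forall>b\<in>C. jp a b \<in> C) \<and>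
                  (\<forall>a\<in>C. \<forall>b\<in>C. \<forall>c\<in>C. jp (jp a b) c = jp a (jp b c))}"

definition is_atom :: "'a set set \<Rightarrow> 'a set \<Rightarrow> 'a set \<Rightarrow> bool" where
  "is_atom P b x \<longleftrightarrow> x \<in> P \<and> x \<noteq> b \<and> \<not> (\<exists>y\<in>P. b \<subset> y \<and> y \<subset> x)"

end

theory Submission
  imports Defs
begin

text \<open>A closed associative subalgebra \<open>C\<close> behaves like an algebra of continuous functions,
  and every closed ideal \<open>N\<close> of \<open>C\<close> with \<open>u \<notin> N\<close> gives the subalgebra \<open>span (insert u N)\<close>;
  so if \<open>C\<close> is an atom, every nonzero such ideal has codimension one. For \<open>x \<in> C\<close> of norm one
  with \<open>c = x\<odot>x \<noteq> u\<close>, the elements \<open>z\<close> with \<open>c\<^sup>n\<odot>z \<longlonglongrightarrow> 0\<close> form such an ideal containing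
  \<open>u - c\<close>, because \<open>\<parallel>c\<^sup>n - c\<^sup>n\<^sup>+\<^sup>1\<parallel> \<le> 2/(n+1)\<close>. That estimate comes from the JB axiom
  \<open>\<parallel>a\<odot>a\<parallel> \<le> \<parallel>a\<odot>a + b\<odot>b\<parallel>\<close>, extended to sums of squares by means of square roots of \<open>u - y\<close>
  (\<open>\<parallel>y\<parallel> < 1\<close>) obtained as fixed points of a contraction. The ideals attached to \<open>x\<close> and to
  the normalised component of \<open>x\<close> in the first ideal meet trivially, so \<open>C = span {a, u}\<close> with
  \<open>a\<odot>a \<in> C\<close>; completing the square yields \<open>e\<close> with \<open>e\<odot>e = u\<close>, and \<open>p = (u + e)/2\<close>.\<close>

section \<open>Spans of closed subspaces\<close>

lemma scaleR_in_subspace_iff: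
  assumes "subspace N" and "v \<notin> N"
  shows "r *\<^sub>R v \<in> N \<longleftrightarrow> r = 0"
proof
  assume "r *\<^sub>R v \<in> N"
  show "r = 0"
  proof (rule ccontr)
    assume "r \<noteq> 0"
    then have "v = (1 / r) *\<^sub>R (r *\<^sub>R v)" by simp
    then show False using assms \<open>r *\<^sub>R v \<in> N\<close> by (metis subspace_scale)
  qed
qed (use assms(1) subspace_0 in simp)

lemma mem_span_insert_subspace:
  assumes "subspace N"
  shows "x \<in> span (insert v N) \<longleftrightarrow> (\<exists>t. x - t *\<^sub>R v \<in> N)"
proof -
  have span_N: "span N = N" using assms by simp
  show ?thesis unfolding span_breakdown_eq span_N ..
qed

lemma norm_scaleR_plus_subspace_ge:
  fixes v :: "'a::real_normed_vector"
  assumes "subspace N" and "n \<in> N"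
  shows "\<bar>t\<bar> * infdist v N \<le> norm (t *\<^sub>R v + n)"
proof (cases "t = 0")
  case False
  have "- ((1 / t) *\<^sub>R n) \<in> N" using assms by (simp add: subspace_neg subspace_scale)
  then have "infdist v N \<le> norm (v + (1 / t) *\<^sub>R n)"
    using infdist_le[of "- ((1 / t) *\<^sub>R n)" N v] by (simp add: dist_norm)
  then have "\<bar>t\<bar> * infdist v N \<le> norm (t *\<^sub>R (v + (1 / t) *\<^sub>R n))"
    by (simp add: mult_left_mono)
  also have "t *\<^sub>R (v + (1 / t) *\<^sub>R n) = t *\<^sub>R v + n" using False by (simp add: algebra_simps)
  finally show ?thesis .
qed simp

lemma closed_span_insert:
  fixes N :: "'a::real_normed_vector set"
  assumes closed: "closed N" and subspace: "subspace N"
  shows "closed (span (insert v N))"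
proof (cases "v \<in> N")
  case True
  then have "span (insert v N) = N" using subspace by (simp add: span_redundant span_base)
  then show ?thesis using closed by simp
next
  case False
  note mem = mem_span_insert_subspace[OF subspace]
  define d where "d = infdist v N"
  have "0 \<in> N" using subspace subspace_0 by blast
  then have d: "d > 0" unfolding d_def using infdist_pos_not_in_closed[OF closed _ False] by auto
  show ?thesis unfolding closed_sequential_limits
  proof (intro allI impI, elim conjE)
    fix x l assume xs: "\<forall>k. x k \<in> span (insert v N)" and lim: "x \<longlonglongrightarrow> l"
    from xs have "\<forall>k. \<exists>t. x k - t *\<^sub>R v \<in> N" unfolding mem .
    then obtain t where t: "\<And>k. x k - t k *\<^sub>R v \<in> N" by (metis choice)
    have "Cauchy t"
    proof (rule metric_CauchyI)
      fix e :: real assume "e > 0"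
      then obtain M where M: "\<And>m k. m \<ge> M \<Longrightarrow> k \<ge> M \<Longrightarrow> dist (x m) (x k) < e * d"
        using metric_CauchyD[OF LIMSEQ_imp_Cauchy[OF lim], of "e * d"] d by auto
      have "dist (t m) (t k) < e" if "m \<ge> M" "k \<ge> M" for m k
      proof -
        have "(x m - t m *\<^sub>R v) - (x k - t k *\<^sub>R v) \<in> N" using t subspace by (simp add: subspace_diff)
        then have "\<bar>t m - t k\<bar> * d \<le> norm ((t m - t k) *\<^sub>R v + ((x m - t m *\<^sub>R v) - (x k - t k *\<^sub>R v)))"
          unfolding d_def by (rule norm_scaleR_plus_subspace_ge[OF subspace])
        also have "\<dots> = dist (x m) (x k)" by (simp add: dist_norm scaleR_diff_left)
        also have "\<dots> < e * d" using M that by blast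
        finally show ?thesis using d by (simp add: dist_real_def)
      qed
      then show "\<exists>M. \<forall>m\<ge>M. \<forall>k\<ge>M. dist (t m) (t k) < e" by blast
    qed
    then obtain T where T: "t \<longlonglongrightarrow> T" using Cauchy_convergent_iff convergent_def by blast
    have "(\<lambda>k. x k - t k *\<^sub>R v) \<longlonglongrightarrow> l - T *\<^sub>R v" using lim T by (intro tendsto_diff tendsto_scaleR tendsto_const)
    from closed_sequentially[OF closed t this] have "l - T *\<^sub>R v \<in> N" .
    then show "l \<in> span (insert v N)" unfolding mem by auto
  qed
qed

lemma closed_span_finite:
  fixes S :: "'a::real_normed_vector set"
  assumes "finite S"
  shows "closed (span S)"
  using assms
proof (induction S rule: finite_induct)
  case (insert v S)
  have "span (insert v S) = span (insert v (span S))" by (simp add: span_insert span_span)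
  with closed_span_insert[OF insert.IH subspace_span] show ?case by (simp only:)
qed simp

lemma span_pair_eq_if_complements_disjoint:
  fixes u z :: "'a::real_vector"
  assumes N1: "subspace N1" and N2: "subspace N2" and disjoint: "N1 \<inter> N2 = {0}"
    and C1: "C = span (insert u N1)" and C2: "C = span (insert u N2)"
    and z: "z \<in> N1" "z - l *\<^sub>R u \<in> N2" and l: "l \<noteq> 0"
  shows "C = span {z, u}"
proof
  show "span {z, u} \<subseteq> C" unfolding C1 using z(1) by (intro span_minimal) (auto intro: span_base)
next
  show "C \<subseteq> span {z, u}"
  proof
    fix w assume "w \<in> C"
    then obtain \<beta> where w1: "w - \<beta> *\<^sub>R u \<in> N1" unfolding C1 mem_span_insert_subspace[OF N1] by blast
    then have "w - \<beta> *\<^sub>R u \<in> C" unfolding C1 by (intro span_base) simp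
    then obtain \<beta>' where w2: "w - \<beta> *\<^sub>R u - \<beta>' *\<^sub>R u \<in> N2" unfolding C2 mem_span_insert_subspace[OF N2] diff_diff_eq by blast
    define r where "r = w - \<beta> *\<^sub>R u - (\<beta>' / l) *\<^sub>R z"
    have "r \<in> N1" unfolding r_def using w1 z N1 by (simp add: subspace_diff subspace_scale)
    moreover have "(\<beta>' / l) *\<^sub>R (z - l *\<^sub>R u) = (\<beta>' / l) *\<^sub>R z - \<beta>' *\<^sub>R u"
      using l by (simp add: scaleR_diff_right)
    then have "r = (w - \<beta> *\<^sub>R u - \<beta>' *\<^sub>R u) - (\<beta>' / l) *\<^sub>R (z - l *\<^sub>R u)"
      unfolding r_def by simp
    then have "r \<in> N2" using w2 z N2 by (simp add: subspace_diff subspace_scale)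
    ultimately have "r = 0" using disjoint by blast
    moreover have "w = r + (\<beta>' / l) *\<^sub>R z + \<beta> *\<^sub>R u" unfolding r_def by simp
    ultimately have "w = (\<beta>' / l) *\<^sub>R z + \<beta> *\<^sub>R u" by simp
    then show "w \<in> span {z, u}" by (simp add: span_add span_base span_scale)
  qed
qed

section \<open>Unital JB algebras\<close>

locale unital_jb_algebra =
  fixes jp :: "'a::banach \<Rightarrow> 'a \<Rightarrow> 'a" (infixl "\<odot>" 70)
    and u :: 'a
  assumes jb_algebra: "jb_algebra jp" and is_unit: "is_unit jp u"
begin

lemma bilinear: "bilinear jp"
  using jb_algebra by (simp add: jb_algebra_def)

lemma linear_left: "linear (\<lambda>a. a \<odot> b)" and linear_right: "linear (\<lambda>b. a \<odot> b)"
  using bilinear by (simp_all add: bilinear_def)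

lemma mult_add_left [simp]: "(a + b) \<odot> c = a \<odot> c + b \<odot> c"
  and mult_add_right [simp]: "c \<odot> (a + b) = c \<odot> a + c \<odot> b"
  and mult_diff_left [simp]: "(a - b) \<odot> c = a \<odot> c - b \<odot> c"
  and mult_diff_right [simp]: "c \<odot> (a - b) = c \<odot> a - c \<odot> b"
  and mult_scaleR_left [simp]: "(r *\<^sub>R a) \<odot> c = r *\<^sub>R (a \<odot> c)"
  and mult_scaleR_right [simp]: "c \<odot> (r *\<^sub>R a) = r *\<^sub>R (c \<odot> a)"
  and mult_zero_left [simp]: "0 \<odot> c = 0"
  and mult_zero_right [simp]: "c \<odot> 0 = 0"
  using linear_add[OF linear_left] linear_add[OF linear_right]
    linear_diff[OF linear_left] linear_diff[OF linear_right]
    linear_scale[OF linear_left] linear_scale[OF linear_right]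
    linear_0[OF linear_left] linear_0[OF linear_right]
  by blast+

lemma mult_commute: "a \<odot> b = b \<odot> a"
  using jb_algebra by (simp add: jb_algebra_def)

lemma norm_mult_le: "norm (a \<odot> b) \<le> norm a * norm b"
  using jb_algebra by (simp add: jb_algebra_def)

lemma norm_square: "norm (a \<odot> a) = (norm a)\<^sup>2"
  using jb_algebra by (simp add: jb_algebra_def)

lemma norm_square_le_add_square: "norm (a \<odot> a) \<le> norm (a \<odot> a + b \<odot> b)"
  using jb_algebra by (simp add: jb_algebra_def)

lemma unit_mult [simp]: "u \<odot> a = a"
  using is_unit by (simp add: is_unit_def)

lemma mult_unit [simp]: "a \<odot> u = a"
  using mult_commute unit_mult by metis

lemma norm_unit_le_1: "norm u \<le> 1"
proof -
  have "(norm u)\<^sup>2 = norm u" using norm_square[of u] by simp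
  then have "norm u = 0 \<or> norm u = 1" by (simp add: power2_eq_square)
  then show ?thesis by auto
qed

lemma nonzero_imp_unit_nonzero: "(a::'a) \<noteq> 0 \<Longrightarrow> u \<noteq> 0"
  using unit_mult[of a] by force

lemma square_scaled_unit_pos:
  assumes "b \<odot> b = \<gamma> *\<^sub>R u" and "b \<noteq> 0"
  shows "\<gamma> > 0"
proof (rule ccontr)
  assume "\<not> \<gamma> > 0"
  define e where "e = sqrt (- \<gamma>) *\<^sub>R u"
  have "e \<odot> e = (- \<gamma>) *\<^sub>R u" unfolding e_def using \<open>\<not> \<gamma> > 0\<close>
    by (simp add: real_sqrt_mult[symmetric])
  then have "(norm b)\<^sup>2 \<le> 0" using norm_square_le_add_square[of b e] assms(1) norm_square[of b] by simp
  then show False using assms(2) by simp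
qed

definition jpow :: "'a \<Rightarrow> nat \<Rightarrow> 'a" where
  "jpow x n = ((\<lambda>z. x \<odot> z) ^^ n) u"

lemma jpow_0 [simp]: "jpow x 0 = u" and jpow_Suc: "jpow x (Suc n) = x \<odot> jpow x n"
  by (simp_all add: jpow_def)

lemma jpow_scaleR: "jpow (r *\<^sub>R x) n = r ^ n *\<^sub>R jpow x n"
  by (induction n) (auto simp: jpow_Suc)

lemma norm_jpow_le: "norm (jpow x n) \<le> norm x ^ n"
proof (induction n)
  case 0
  then show ?case using norm_unit_le_1 by simp
next
  case (Suc n)
  have "norm (jpow x (Suc n)) \<le> norm x * norm (jpow x n)" using norm_mult_le by (simp add: jpow_Suc)
  also have "\<dots> \<le> norm x * norm x ^ n" using Suc by (simp add: mult_left_mono)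
  finally show ?case by simp
qed

lemma mem_span_pair_iff: "x \<in> span {a, b} \<longleftrightarrow> (\<exists>s t. x = s *\<^sub>R a + t *\<^sub>R b)"
proof -
  have "x - s *\<^sub>R a = t *\<^sub>R b \<longleftrightarrow> x = s *\<^sub>R a + t *\<^sub>R b" for s t by (auto simp: algebra_simps)
  then show ?thesis unfolding span_breakdown_eq span_singleton image_iff by auto
qed

lemma is_projection_half_unit_plus_symmetry:
  assumes "e \<odot> e = u"
  shows "is_projection jp ((1/2) *\<^sub>R (u + e))"
proof -
  have square: "(u + e) \<odot> (u + e) = 2 *\<^sub>R (u + e)" using assms by (simp add: scaleR_2 ac_simps)
  have "((1/2) *\<^sub>R (u + e)) \<odot> ((1/2) *\<^sub>R (u + e)) = (1/2 * (1/2)) *\<^sub>R ((u + e) \<odot> (u + e))"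
    by (simp only: mult_scaleR_left mult_scaleR_right scaleR_scaleR)
  also have "\<dots> = (1/2) *\<^sub>R (u + e)" unfolding square by simp
  finally show ?thesis unfolding is_projection_def .
qed

lemma span_eq_span_symmetry_if_square_in_span:
  assumes a: "a \<notin> span {u}" and aa: "a \<odot> a \<in> span {a, u}"
  shows "\<exists>e. e \<odot> e = u \<and> e \<notin> span {u} \<and> span {a, u} = span {e, u}"
proof -
  obtain \<alpha> \<beta> where aa: "a \<odot> a = \<alpha> *\<^sub>R a + \<beta> *\<^sub>R u" using aa unfolding mem_span_pair_iff by blast
  define b where "b = a - (\<alpha> / 2) *\<^sub>R u"
  define \<gamma> where "\<gamma> = \<beta> + \<alpha>\<^sup>2 / 4"
  have "b \<odot> b = a \<odot> a - (\<alpha> / 2) *\<^sub>R a - (\<alpha> / 2) *\<^sub>R a + (\<alpha>\<^sup>2 / 4) *\<^sub>R u"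
    unfolding b_def by (simp add: algebra_simps power2_eq_square)
  also have "\<dots> = a \<odot> a - \<alpha> *\<^sub>R a + (\<alpha>\<^sup>2 / 4) *\<^sub>R u"
    by (metis diff_diff_eq field_sum_of_halves scaleR_add_left)
  finally have bb: "b \<odot> b = \<gamma> *\<^sub>R u" unfolding aa \<gamma>_def by (simp add: algebra_simps)
  have "b \<noteq> 0" using a unfolding b_def by (auto simp: span_base span_scale)
  with bb have \<gamma>: "\<gamma> > 0" by (rule square_scaled_unit_pos)
  define e where "e = (1 / sqrt \<gamma>) *\<^sub>R b"
  have "e \<odot> e = u" unfolding e_def using bb \<gamma> by simp
  moreover have a_e: "a = sqrt \<gamma> *\<^sub>R e + (\<alpha> / 2) *\<^sub>R u" unfolding e_def b_def using \<gamma> by simp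
  then have "e \<notin> span {u}" using a by (auto simp: span_add span_scale span_base)
  moreover have "span {a, u} = span {e, u}"
  proof -
    have "e = (1 / sqrt \<gamma>) *\<^sub>R a - (\<alpha> / (2 * sqrt \<gamma>)) *\<^sub>R u"
      unfolding e_def b_def by (simp add: algebra_simps)
    then have "e \<in> span {a, u}" by (simp add: span_diff span_scale span_base)
    moreover have "a \<in> span {e, u}" unfolding a_e by (simp add: span_add span_scale span_base)
    ultimately show ?thesis unfolding span_eq by (simp add: span_base)
  qed
  ultimately show ?thesis by blast
qed

lemma projection_of_symmetry:
  assumes ee: "e \<odot> e = u" and e: "e \<notin> span {u}"
  defines "p \<equiv> (1/2) *\<^sub>R (u + e)"
  shows "is_projection jp p \<and> p \<noteq> 0 \<and> p \<noteq> u \<and> span {e, u} = span {p, u - p}"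
proof (intro conjI)
  show "is_projection jp p" unfolding p_def using ee by (rule is_projection_half_unit_plus_symmetry)
  have "p + p = u + e" unfolding p_def by (metis field_sum_of_halves scaleR_add_left scaleR_one)
  then have e_p: "e = p - (u - p)" by (metis add_diff_cancel_left' diff_diff_eq2)
  show "p \<noteq> 0"
  proof
    assume "p = 0"
    then have "e = - u" unfolding e_p by simp
    then show False using e by (simp add: span_neg span_base)
  qed
  show "p \<noteq> u"
  proof
    assume "p = u"
    then have "e = u" unfolding e_p by simp
    then show False using e by (simp add: span_base)
  qed
  have "e \<in> span {p, u - p}" unfolding e_p by (simp add: span_diff span_base)
  moreover have "u \<in> span {p, u - p}" using span_add[of p "{p, u - p}" "u - p"] by (simp add: span_base)
  moreover have "p \<in> span {e, u}" unfolding p_def by (simp add: span_add span_scale span_base)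
  moreover then have "u - p \<in> span {e, u}" by (simp add: span_diff span_base)
  ultimately show "span {e, u} = span {p, u - p}" unfolding span_eq by simp
qed

end

section \<open>Closed associative subalgebras\<close>

locale jb_assoc_subalgebra = unital_jb_algebra +
  fixes C :: "'a::banach set"
  assumes C_ASU: "C \<in> ASU jp u"
begin

lemma subspace_C: "subspace C" and closed_C: "closed C" and unit_in_C [simp]: "u \<in> C"
  and mult_in_C [simp]: "a \<in> C \<Longrightarrow> b \<in> C \<Longrightarrow> a \<odot> b \<in> C"
  and mult_assoc: "a \<in> C \<Longrightarrow> b \<in> C \<Longrightarrow> c \<in> C \<Longrightarrow> (a \<odot> b) \<odot> c = a \<odot> (b \<odot> c)"
  using C_ASU by (auto simp: ASU_def)

lemma zero_in_C [simp]: "0 \<in> C"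
  and add_in_C [simp]: "a \<in> C \<Longrightarrow> b \<in> C \<Longrightarrow> a + b \<in> C"
  and diff_in_C [simp]: "a \<in> C \<Longrightarrow> b \<in> C \<Longrightarrow> a - b \<in> C"
  and scaleR_in_C [simp]: "a \<in> C \<Longrightarrow> r *\<^sub>R a \<in> C"
  using subspace_C subspace_0 subspace_add subspace_diff subspace_scale by blast+

lemma mult_mult_swap:
  assumes "a \<in> C" "b \<in> C" "c \<in> C" "d \<in> C"
  shows "(a \<odot> b) \<odot> (c \<odot> d) = (a \<odot> c) \<odot> (b \<odot> d)"
proof -
  have "(a \<odot> b) \<odot> (c \<odot> d) = a \<odot> ((b \<odot> c) \<odot> d)" using assms by (simp add: mult_assoc)
  also have "b \<odot> c = c \<odot> b" by (rule mult_commute)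
  also have "a \<odot> ((c \<odot> b) \<odot> d) = (a \<odot> c) \<odot> (b \<odot> d)" using assms by (simp add: mult_assoc)
  finally show ?thesis .
qed

lemma ASU_if_subalgebra:
  assumes "S \<subseteq> C" "subspace S" "closed S" "u \<in> S" "\<And>a b. a \<in> S \<Longrightarrow> b \<in> S \<Longrightarrow> a \<odot> b \<in> S"
  shows "S \<in> ASU jp u"
proof -
  have "\<forall>a\<in>S. \<forall>b\<in>S. \<forall>c\<in>S. (a \<odot> b) \<odot> c = a \<odot> (b \<odot> c)"
    using assms(1) mult_assoc by (meson subsetD)
  then show ?thesis using assms unfolding ASU_def by blast
qed

text \<open>On the ball of radius \<open>\<rho> = (1 + \<parallel>y\<parallel>)/2\<close> the map is a contraction with constant \<open>\<rho>\<close>,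
  since \<open>r\<odot>r - s\<odot>s = (r - s)\<odot>(r + s)\<close>.\<close>
lemma exists_fixed_point_half_add_square:
  assumes y: "y \<in> C" "norm y < 1"
  shows "\<exists>r\<in>C. (1/2) *\<^sub>R (y + r \<odot> r) = r"
proof -
  define \<rho> where "\<rho> = (1 + norm y) / 2"
  have rho: "0 \<le> \<rho>" "\<rho> < 1" "norm y + \<rho>\<^sup>2 \<le> 2 * \<rho>"
  proof -
    have q: "0 \<le> norm y" "norm y < 1" using y by auto
    have "(1 + norm y) * (1 + norm y) \<le> 2 * 2" by (rule mult_mono) (use q in linarith)+
    then show "0 \<le> \<rho>" "\<rho> < 1" "norm y + \<rho>\<^sup>2 \<le> 2 * \<rho>" using q unfolding \<rho>_def
      by (auto simp: power2_eq_square field_simps)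
  qed
  define S where "S = C \<inter> cball 0 \<rho>"
  define f where "f r = (1/2) *\<^sub>R (y + r \<odot> r)" for r
  have "\<exists>!r\<in>S. f r = r"
  proof (rule Banach_fix)
    show "complete S" unfolding S_def using closed_C by (simp add: complete_eq_closed closed_Int)
    have "0 \<in> S" using rho unfolding S_def by simp
    then show "S \<noteq> {}" by blast
    show "0 \<le> \<rho>" "\<rho> < 1" using rho by auto
    show "f ` S \<subseteq> S"
    proof
      fix z assume "z \<in> f ` S"
      then obtain r where r: "r \<in> C" "norm r \<le> \<rho>" and z: "z = f r" unfolding S_def by auto
      have "norm (y + r \<odot> r) \<le> norm y + \<rho>\<^sup>2"
        using norm_triangle_ineq[of y "r \<odot> r"] norm_square[of r] power_mono[OF r(2) norm_ge_zero, of 2]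
        by linarith
      then show "z \<in> S" using rho r y unfolding z f_def S_def by simp
    qed
    fix a b assume ab: "a \<in> S" "b \<in> S"
    have "f a - f b = (1/2) *\<^sub>R ((a - b) \<odot> (a + b))"
      unfolding f_def by (simp add: mult_commute[of b a] algebra_simps)
    then have "norm (f a - f b) \<le> (1/2) * (norm (a - b) * norm (a + b))"
      using norm_mult_le[of "a - b" "a + b"] by simp
    moreover have "norm (a + b) \<le> 2 * \<rho>" using ab norm_triangle_ineq[of a b] unfolding S_def by simp
    then have "norm (a - b) * norm (a + b) \<le> norm (a - b) * (2 * \<rho>)" by (intro mult_left_mono) auto
    ultimately show "dist (f a) (f b) \<le> \<rho> * dist a b" by (simp add: dist_norm algebra_simps)
  qed
  then show ?thesis unfolding S_def f_def by auto
qed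

lemma exists_sqrt_unit_minus:
  assumes "y \<in> C" "norm y < 1"
  shows "\<exists>v\<in>C. v \<odot> v = u - y"
proof -
  obtain r where r: "r \<in> C" "(1/2) *\<^sub>R (y + r \<odot> r) = r"
    using exists_fixed_point_half_add_square[OF assms] by blast
  have "y + r \<odot> r = 2 *\<^sub>R ((1/2) *\<^sub>R (y + r \<odot> r))" by simp
  then have "y + r \<odot> r = 2 *\<^sub>R r" using r(2) by simp
  moreover have "(u - r) \<odot> (u - r) = u - 2 *\<^sub>R r + r \<odot> r" by (simp add: scaleR_2 algebra_simps)
  ultimately have "(u - r) \<odot> (u - r) = u - y" by (simp add: algebra_simps)
  then show ?thesis using r(1) by (intro bexI[of _ "u - r"]) auto
qed

lemma norm_scaled_unit_minus_square_le:
  assumes a: "a \<in> C" and t: "norm (a \<odot> a) < t"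
  shows "norm (t *\<^sub>R u - a \<odot> a) \<le> t"
proof -
  have t_pos: "t > 0" using t norm_ge_zero[of "a \<odot> a"] by linarith
  define y where "y = (1 / t) *\<^sub>R (a \<odot> a)"
  have "norm y < 1" using t t_pos unfolding y_def by (simp add: field_simps)
  then obtain v where v: "v \<in> C" "v \<odot> v = u - y"
    using exists_sqrt_unit_minus[of y] a unfolding y_def by auto
  define b where "b = (1 / sqrt t) *\<^sub>R a"
  have "b \<odot> b = y" unfolding b_def y_def using t_pos by (simp add: power_divide)
  then have "norm (u - y) \<le> norm u" using norm_square_le_add_square[of v b] v by simp
  then have "norm (u - y) \<le> 1" using norm_unit_le_1 by linarith
  moreover have "t *\<^sub>R u - a \<odot> a = t *\<^sub>R (u - y)" using t_pos unfolding y_def by (simp add: algebra_simps)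
  ultimately show ?thesis using t_pos by simp
qed

inductive_set sum_squares :: "'a set" where
  zero: "0 \<in> sum_squares"
| add_square: "a \<in> C \<Longrightarrow> s \<in> sum_squares \<Longrightarrow> a \<odot> a + s \<in> sum_squares"

lemma sum_squares_in_C: "s \<in> sum_squares \<Longrightarrow> s \<in> C"
  by (induction rule: sum_squares.induct) auto

lemma sum_squares_bounded: "s \<in> sum_squares \<Longrightarrow> \<exists>T\<ge>0. norm (T *\<^sub>R u - s) \<le> T"
proof (induction rule: sum_squares.induct)
  case zero
  then show ?case by (intro exI[of _ 0]) auto
next
  case (add_square a s)
  then obtain T where T: "T \<ge> 0" "norm (T *\<^sub>R u - s) \<le> T" by auto
  define t where "t = norm (a \<odot> a) + 1"
  have t: "norm (t *\<^sub>R u - a \<odot> a) \<le> t" "t \<ge> 0"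
    using norm_scaled_unit_minus_square_le[of a t] add_square unfolding t_def by auto
  have "(t + T) *\<^sub>R u - (a \<odot> a + s) = (t *\<^sub>R u - a \<odot> a) + (T *\<^sub>R u - s)" by (simp add: algebra_simps)
  then have "norm ((t + T) *\<^sub>R u - (a \<odot> a + s)) \<le> t + T"
    using norm_triangle_ineq[of "t *\<^sub>R u - a \<odot> a" "T *\<^sub>R u - s"] t T by (simp only:)
  then show ?case using t T by (intro exI[of _ "t + T"]) auto
qed

text \<open>A sum of squares \<open>s\<close> is, up to any \<open>e > 0\<close>, itself a square: \<open>e u + s = w \<odot> w\<close>.\<close>
lemma norm_square_le_add_sum_squares:
  assumes a: "a \<in> C" and s: "s \<in> sum_squares"
  shows "norm (a \<odot> a) \<le> norm (a \<odot> a + s)"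
proof (rule field_le_epsilon)
  fix e :: real assume e: "e > 0"
  obtain T where T: "T \<ge> 0" "norm (T *\<^sub>R u - s) \<le> T" using sum_squares_bounded[OF s] by auto
  define y where "y = (1 / (T + e)) *\<^sub>R (T *\<^sub>R u - s)"
  have "norm y \<le> T / (T + e)" using T e unfolding y_def by (simp add: divide_right_mono)
  also have "\<dots> < 1" using T e by simp
  finally have "norm y < 1" .
  moreover have "y \<in> C" unfolding y_def using sum_squares_in_C[OF s] by simp
  ultimately obtain v where v: "v \<in> C" "v \<odot> v = u - y" using exists_sqrt_unit_minus by blast
  define w where "w = sqrt (T + e) *\<^sub>R v"
  have "w \<odot> w = (T + e) *\<^sub>R (u - y)" unfolding w_def using v T e
    by (simp add: real_sqrt_mult[symmetric] power2_eq_square[symmetric])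
  also have "(T + e) *\<^sub>R y = T *\<^sub>R u - s" using T e unfolding y_def by simp
  then have "(T + e) *\<^sub>R (u - y) = e *\<^sub>R u + s" by (simp add: algebra_simps)
  finally have w: "w \<odot> w = e *\<^sub>R u + s" .
  have "norm (a \<odot> a) \<le> norm (a \<odot> a + w \<odot> w)" by (rule norm_square_le_add_square)
  also have "a \<odot> a + w \<odot> w = (a \<odot> a + s) + e *\<^sub>R u" using w by (simp add: algebra_simps)
  also have "norm \<dots> \<le> norm (a \<odot> a + s) + e * norm u"
    using norm_triangle_ineq[of "a \<odot> a + s" "e *\<^sub>R u"] e by simp
  also have "\<dots> \<le> norm (a \<odot> a + s) + e" using norm_unit_le_1 e by (simp add: mult_left_le)
  finally show "norm (a \<odot> a) \<le> norm (a \<odot> a + s) + e" .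
qed

lemma jpow_in_C [simp]: "x \<in> C \<Longrightarrow> jpow x n \<in> C"
  by (induction n) (auto simp: jpow_Suc)

lemma jpow_add: "x \<in> C \<Longrightarrow> jpow x (m + n) = jpow x m \<odot> jpow x n"
  by (induction m) (auto simp: jpow_Suc mult_assoc)

lemma jpow_Suc_right: "x \<in> C \<Longrightarrow> jpow x (Suc n) = jpow x n \<odot> x"
  using jpow_add[of x n 1] by (simp add: jpow_Suc)

lemma jpow_square: "x \<in> C \<Longrightarrow> jpow (x \<odot> x) n = jpow x n \<odot> jpow x n"
proof (induction n)
  case (Suc n)
  have "jpow (x \<odot> x) (Suc n) = (x \<odot> x) \<odot> (jpow x n \<odot> jpow x n)" using Suc by (simp add: jpow_Suc)
  also have "\<dots> = (x \<odot> jpow x n) \<odot> (x \<odot> jpow x n)" using Suc.prems by (simp add: mult_mult_swap)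
  finally show ?case by (simp add: jpow_Suc)
qed simp

lemma norm_jpow_eq_1:
  assumes "u \<noteq> 0" "x \<in> C" "norm x = 1"
  shows "norm (jpow x n) = 1"
proof -
  have norm_2_pow: "norm (jpow x (2 ^ k)) = 1" for k
  proof (induction k)
    case 0
    then show ?case using assms by (simp add: jpow_Suc)
  next
    case (Suc k)
    have "jpow x (2 ^ Suc k) = jpow x (2 ^ k) \<odot> jpow x (2 ^ k)"
      using jpow_add[of x "2 ^ k" "2 ^ k"] assms by (simp add: mult_2)
    then show ?case using norm_square[of "jpow x (2 ^ k)"] Suc by simp
  qed
  have le: "norm (jpow x m) \<le> 1" for m using norm_jpow_le[of x m] assms by simp
  obtain k where k: "n \<le> 2 ^ k" using less_exp[of n] by (meson less_imp_le)
  have "jpow x (2 ^ k) = jpow x n \<odot> jpow x (2 ^ k - n)" using jpow_add[of x n "2 ^ k - n"] k assms by simp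
  then have "1 \<le> norm (jpow x n) * norm (jpow x (2 ^ k - n))" using norm_2_pow[of k] norm_mult_le by metis
  also have "\<dots> \<le> norm (jpow x n)" using le[of "2 ^ k - n"] by (simp add: mult_left_le)
  finally show ?thesis using le[of n] by simp
qed

text \<open>The increments of this sequence are the squares \<open>(k+1) (y\<^sup>k\<odot>(u - y\<odot>y))\<^sup>2\<close>.\<close>
lemma jpow_telescoping_sum_squares:
  assumes y: "y \<in> C"
  defines "d \<equiv> y \<odot> y"
  shows "u - jpow d (Suc k) - real (Suc k) *\<^sub>R (jpow d k - jpow d (Suc k)) \<in> sum_squares"
proof (induction k)
  case 0
  show ?case by (simp add: jpow_Suc sum_squares.zero)
next
  case (Suc k)
  have d: "d \<in> C" using y unfolding d_def by simp
  define w where "w = jpow y k \<odot> (u - d)"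
  have "w \<odot> w = (jpow y k \<odot> jpow y k) \<odot> ((u - d) \<odot> (u - d))"
    unfolding w_def by (rule mult_mult_swap) (use y d in auto)
  also have "jpow y k \<odot> jpow y k = jpow d k" using jpow_square[OF y] unfolding d_def by simp
  also have "(u - d) \<odot> (u - d) = u - 2 *\<^sub>R d + d \<odot> d"
    by (simp add: scaleR_2 algebra_simps)
  also have "jpow d k \<odot> (u - 2 *\<^sub>R d + d \<odot> d) = jpow d k - 2 *\<^sub>R jpow d (Suc k) + jpow d (Suc (Suc k))"
    using d by (simp add: jpow_Suc_right mult_assoc[symmetric])
  finally have ww: "w \<odot> w = jpow d k - 2 *\<^sub>R jpow d (Suc k) + jpow d (Suc (Suc k))" .
  define a where "a = sqrt (real (Suc k)) *\<^sub>R w"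
  have aa: "a \<odot> a = real (Suc k) *\<^sub>R (w \<odot> w)" unfolding a_def by (simp del: of_nat_Suc)
  have step: "u - jpow d (Suc (Suc k)) - real (Suc (Suc k)) *\<^sub>R (jpow d (Suc k) - jpow d (Suc (Suc k)))
      = a \<odot> a + (u - jpow d (Suc k) - real (Suc k) *\<^sub>R (jpow d k - jpow d (Suc k)))"
    unfolding aa ww of_nat_Suc[of "Suc k"] by (simp add: algebra_simps scaleR_2 del: of_nat_Suc)
  have "a \<in> C" unfolding a_def w_def using y d by simp
  then show ?case unfolding step using Suc.IH by (rule sum_squares.add_square)
qed

lemma norm_jpow_diff_le_of_norm_less_1:
  assumes y: "y \<in> C" "norm y < 1"
  defines "d \<equiv> y \<odot> y"
  shows "norm (jpow d n - jpow d (Suc n)) \<le> 2 / real (Suc n)"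
proof -
  have d: "d \<in> C" using y unfolding d_def by simp
  have "norm d < 1" using y norm_square[of y] unfolding d_def by (simp add: power_less_one_iff)
  then obtain v where v: "v \<in> C" "v \<odot> v = u - d" using exists_sqrt_unit_minus[OF d] by auto
  define a where "a = sqrt (real (Suc n)) *\<^sub>R (jpow y n \<odot> v)"
  have "(jpow y n \<odot> v) \<odot> (jpow y n \<odot> v) = (jpow y n \<odot> jpow y n) \<odot> (v \<odot> v)"
    by (rule mult_mult_swap) (use y v in auto)
  also have "jpow y n \<odot> jpow y n = jpow d n" unfolding d_def using jpow_square[OF y(1)] by simp
  also have "jpow d n \<odot> (v \<odot> v) = jpow d n - jpow d (Suc n)" using v d by (simp add: jpow_Suc_right)
  finally have aa: "a \<odot> a = real (Suc n) *\<^sub>R (jpow d n - jpow d (Suc n))"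
    unfolding a_def by (simp del: of_nat_Suc)
  have "a \<in> C" unfolding a_def using y v by simp
  then have "norm (a \<odot> a) \<le> norm (a \<odot> a + (u - jpow d (Suc n) - real (Suc n) *\<^sub>R (jpow d n - jpow d (Suc n))))"
    using jpow_telescoping_sum_squares[OF y(1)] unfolding d_def by (rule norm_square_le_add_sum_squares)
  also have "\<dots> = norm (u - jpow d (Suc n))" unfolding aa by simp
  also have "\<dots> \<le> norm u + norm (jpow d (Suc n))" by (rule norm_triangle_ineq4)
  also have "\<dots> \<le> 2"
    using norm_unit_le_1 norm_jpow_le[of d "Suc n"] power_le_one[of "norm d" "Suc n"] \<open>norm d < 1\<close>
    by simp
  finally have "norm (real (Suc n) *\<^sub>R (jpow d n - jpow d (Suc n))) \<le> 2" unfolding aa .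
  then have "real (Suc n) * norm (jpow d n - jpow d (Suc n)) \<le> 2"
    by (metis norm_scaleR abs_of_nonneg of_nat_0_le_iff)
  then show ?thesis by (simp add: field_simps del: of_nat_Suc)
qed

text \<open>Square roots of \<open>u - y\<close> are only available for \<open>\<parallel>y\<parallel> < 1\<close>, hence the detour through
  \<open>s x\<close> with \<open>s \<rightarrow> 1\<close>.\<close>
lemma norm_jpow_diff_le:
  assumes x: "x \<in> C" "norm x \<le> 1"
  defines "c \<equiv> x \<odot> x"
  shows "norm (jpow c n - jpow c (Suc n)) \<le> 2 / real (Suc n)"
proof -
  let ?f = "\<lambda>s. norm ((s\<^sup>2) ^ n *\<^sub>R jpow c n - (s\<^sup>2) ^ Suc n *\<^sub>R jpow c (Suc n))"
  have "(?f \<longlongrightarrow> ?f 1) (at_left 1)" by (intro tendsto_intros)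
  moreover have "\<forall>\<^sub>F s in at_left 1. ?f s \<le> 2 / real (Suc n)"
    using eventually_at_left_real[OF zero_less_one]
  proof (rule eventually_mono)
    fix s :: real assume "s \<in> {0<..<1}"
    then have s: "0 < s" "s < 1" by auto
    have "norm (s *\<^sub>R x) \<le> s" using s x by (simp add: mult_left_le)
    then have "norm (s *\<^sub>R x) < 1" using s by linarith
    then have "norm (jpow ((s *\<^sub>R x) \<odot> (s *\<^sub>R x)) n - jpow ((s *\<^sub>R x) \<odot> (s *\<^sub>R x)) (Suc n))
        \<le> 2 / real (Suc n)"
      using x by (intro norm_jpow_diff_le_of_norm_less_1) auto
    moreover have "(s *\<^sub>R x) \<odot> (s *\<^sub>R x) = s\<^sup>2 *\<^sub>R c" unfolding c_def by (simp add: power2_eq_square)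
    ultimately show "?f s \<le> 2 / real (Suc n)" by (simp only: jpow_scaleR)
  qed
  ultimately have "?f 1 \<le> 2 / real (Suc n)"
    by (rule tendsto_upperbound) (simp add: trivial_limit_at_left_real)
  then show ?thesis by simp
qed

definition closed_ideal :: "'a set \<Rightarrow> bool" where
  "closed_ideal N \<longleftrightarrow> N \<subseteq> C \<and> subspace N \<and> closed N \<and> (\<forall>z\<in>N. \<forall>w\<in>C. z \<odot> w \<in> N)"

lemma closed_ideal_Int: "closed_ideal N1 \<Longrightarrow> closed_ideal N2 \<Longrightarrow> closed_ideal (N1 \<inter> N2)"
  unfolding closed_ideal_def by (auto simp: subspace_inter closed_Int)

lemma span_insert_unit_ASU:
  assumes "closed_ideal N"
  shows "span (insert u N) \<in> ASU jp u"
proof (rule ASU_if_subalgebra)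
  have N: "N \<subseteq> C" "subspace N" "closed N" "\<And>z w. z \<in> N \<Longrightarrow> w \<in> C \<Longrightarrow> z \<odot> w \<in> N"
    using assms unfolding closed_ideal_def by auto
  note mem = mem_span_insert_subspace[OF N(2)]
  show "span (insert u N) \<subseteq> C" using N(1) subspace_C by (intro span_minimal) auto
  show "subspace (span (insert u N))" by (rule subspace_span)
  show "closed (span (insert u N))" using N(3,2) by (rule closed_span_insert)
  show "u \<in> span (insert u N)" by (simp add: span_base)
  fix a b assume "a \<in> span (insert u N)" "b \<in> span (insert u N)"
  then obtain s t where st: "a - s *\<^sub>R u \<in> N" "b - t *\<^sub>R u \<in> N" unfolding mem by blast
  have "a \<odot> b - (s * t) *\<^sub>R u
      = (a - s *\<^sub>R u) \<odot> (b - t *\<^sub>R u) + s *\<^sub>R (b - t *\<^sub>R u) + t *\<^sub>R (a - s *\<^sub>R u)"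
    by (simp add: mult_commute[of u] algebra_simps)
  also have "\<dots> \<in> N"
  proof -
    have "(a - s *\<^sub>R u) \<odot> (b - t *\<^sub>R u) \<in> N" using st N(1,4) by blast
    then show ?thesis by (intro subspace_add[OF N(2)] subspace_scale[OF N(2)] st)
  qed
  finally show "a \<odot> b \<in> span (insert u N)" unfolding mem by blast
qed

text \<open>Viewing \<open>C\<close> as functions and \<open>0 \<le> c \<le> 1\<close>, this is the ideal of functions
  vanishing where \<open>c = 1\<close>.\<close>
definition jpow_vanishing :: "'a \<Rightarrow> 'a set" where
  "jpow_vanishing c = {z \<in> C. (\<lambda>n. jpow c n \<odot> z) \<longlonglongrightarrow> 0}"

lemma subspace_jpow_vanishing: "subspace (jpow_vanishing c)"
proof -
  have "(\<lambda>n. jpow c n \<odot> (z1 + z2)) \<longlonglongrightarrow> 0"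
    if "(\<lambda>n. jpow c n \<odot> z1) \<longlonglongrightarrow> 0" "(\<lambda>n. jpow c n \<odot> z2) \<longlonglongrightarrow> 0" for z1 z2
    using tendsto_add_zero[OF that] by simp
  moreover have "(\<lambda>n. jpow c n \<odot> (r *\<^sub>R z)) \<longlonglongrightarrow> 0" if "(\<lambda>n. jpow c n \<odot> z) \<longlonglongrightarrow> 0" for r z
    using tendsto_scaleR[OF tendsto_const that, of r] by simp
  ultimately show ?thesis unfolding subspace_def jpow_vanishing_def by auto
qed

lemma jpow_vanishing_mult:
  assumes "z \<in> jpow_vanishing c" "w \<in> C" "c \<in> C"
  shows "z \<odot> w \<in> jpow_vanishing c"
proof -
  have z: "z \<in> C" "(\<lambda>n. jpow c n \<odot> z) \<longlonglongrightarrow> 0" using assms(1) unfolding jpow_vanishing_def by auto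
  have "norm (jpow c n \<odot> (z \<odot> w)) \<le> norm (jpow c n \<odot> z) * norm w" for n
    using z(1) assms(2,3) norm_mult_le[of "jpow c n \<odot> z" w] by (simp add: mult_assoc)
  then have bound: "\<forall>n. norm (jpow c n \<odot> (z \<odot> w)) \<le> norm (jpow c n \<odot> z) * norm w" by blast
  have "(\<lambda>n. norm (jpow c n \<odot> z) * norm w) \<longlonglongrightarrow> 0"
    using z(2) by (intro tendsto_mult_left_zero tendsto_norm_zero)
  then have "(\<lambda>n. jpow c n \<odot> (z \<odot> w)) \<longlonglongrightarrow> 0"
    by (rule Lim_null_comparison[OF always_eventually[OF bound]])
  then show ?thesis using z(1) assms(2) unfolding jpow_vanishing_def by simp
qed

lemma closed_jpow_vanishing:
  assumes c: "c \<in> C" "norm c \<le> 1"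
  shows "closed (jpow_vanishing c)"
  unfolding closed_sequential_limits
proof (intro allI impI, elim conjE)
  fix zs z assume zs: "\<forall>k. zs k \<in> jpow_vanishing c" and lim: "zs \<longlonglongrightarrow> z"
  have "z \<in> C"
    using closed_sequentially[OF closed_C _ lim] zs unfolding jpow_vanishing_def by blast
  moreover have "(\<lambda>n. jpow c n \<odot> z) \<longlonglongrightarrow> 0"
  proof (rule LIMSEQ_I)
    fix e :: real assume e: "e > 0"
    obtain k where k: "norm (zs k - z) < e / 2" using LIMSEQ_D[OF lim, of "e / 2"] e by auto
    have zs_k: "(\<lambda>n. jpow c n \<odot> zs k) \<longlonglongrightarrow> 0" using zs unfolding jpow_vanishing_def by auto
    obtain M where M: "\<And>n. n \<ge> M \<Longrightarrow> norm (jpow c n \<odot> zs k) < e / 2"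
      using LIMSEQ_D[OF zs_k, of "e / 2"] e by auto
    have "norm (jpow c n \<odot> z - 0) < e" if "n \<ge> M" for n
    proof -
      have "norm (jpow c n) \<le> 1"
        using norm_jpow_le[of c n] power_le_one[OF norm_ge_zero c(2), of n] by linarith
      then have "norm (jpow c n) * norm (zs k - z) \<le> norm (zs k - z)"
        by (simp add: mult_left_le_one_le)
      then have "norm (jpow c n \<odot> (zs k - z)) \<le> norm (zs k - z)"
        using norm_mult_le[of "jpow c n" "zs k - z"] by linarith
      then have "norm (jpow c n \<odot> z) \<le> norm (jpow c n \<odot> zs k) + norm (zs k - z)"
        using norm_triangle_ineq4[of "jpow c n \<odot> zs k" "jpow c n \<odot> (zs k - z)"] by simp
      then show ?thesis using M[OF that] k by simp
    qed
    then show "\<exists>M. \<forall>n\<ge>M. norm (jpow c n \<odot> z - 0) < e" by blast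
  qed
  ultimately show "z \<in> jpow_vanishing c" unfolding jpow_vanishing_def by simp
qed

lemma closed_ideal_jpow_vanishing:
  assumes "c \<in> C" "norm c \<le> 1"
  shows "closed_ideal (jpow_vanishing c)"
  unfolding closed_ideal_def using assms subspace_jpow_vanishing closed_jpow_vanishing jpow_vanishing_mult
  by (auto simp: jpow_vanishing_def)

lemma unit_notin_jpow_vanishing:
  assumes "u \<noteq> 0" "x \<in> C" "norm x = 1"
  shows "u \<notin> jpow_vanishing (x \<odot> x)"
proof
  assume "u \<in> jpow_vanishing (x \<odot> x)"
  then have "(\<lambda>n. jpow (x \<odot> x) n) \<longlonglongrightarrow> 0" unfolding jpow_vanishing_def by simp
  then obtain n where "norm (jpow (x \<odot> x) n) < 1" using LIMSEQ_D[of _ 0 1] by auto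
  moreover have "norm (jpow (x \<odot> x) n) = 1"
    using jpow_square[OF assms(2)] norm_square norm_jpow_eq_1[OF assms] by simp
  ultimately show False by simp
qed

lemma unit_minus_square_in_jpow_vanishing:
  assumes "x \<in> C" "norm x \<le> 1"
  shows "u - x \<odot> x \<in> jpow_vanishing (x \<odot> x)"
proof -
  have "jpow (x \<odot> x) n \<odot> (u - x \<odot> x) = jpow (x \<odot> x) n - jpow (x \<odot> x) (Suc n)" for n
    using assms by (simp add: jpow_Suc_right)
  moreover
  have bound: "\<forall>n. norm (jpow (x \<odot> x) n - jpow (x \<odot> x) (Suc n)) \<le> 2 / real (Suc n)"
    using norm_jpow_diff_le[OF assms] by blast
  have "(\<lambda>n. 2 / real (Suc n)) \<longlonglongrightarrow> 0" using LIMSEQ_Suc[OF lim_const_over_n[of 2]] by simp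
  then have "(\<lambda>n. jpow (x \<odot> x) n - jpow (x \<odot> x) (Suc n)) \<longlonglongrightarrow> 0"
    by (rule Lim_null_comparison[OF always_eventually[OF bound]])
  ultimately show ?thesis using assms unfolding jpow_vanishing_def by simp
qed

lemma atom_if_span_projection:
  assumes p: "is_projection jp p" "p \<noteq> 0" "p \<noteq> u" and C: "C = span {p, u - p}"
  shows "is_atom (ASU jp u) (span {u}) C"
proof -
  have "u \<noteq> 0" using nonzero_imp_unit_nonzero[OF p(2)] .
  have "p \<notin> span {u}"
  proof
    assume "p \<in> span {u}"
    then obtain r where r: "p = r *\<^sub>R u" by (auto simp: span_singleton)
    then have "(r * r) *\<^sub>R u = r *\<^sub>R u" using p(1) unfolding is_projection_def by simp
    then have "r * r = r" using \<open>u \<noteq> 0\<close> by (metis scaleR_cancel_right)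
    then have "r = 0 \<or> r = 1" by auto
    then show False using r p(2,3) by auto
  qed
  moreover have "p \<in> C" unfolding C by (simp add: span_base)
  moreover have "span {p, u - p} \<subseteq> D" if D_ASU: "D \<in> ASU jp u" and above: "span {u} \<subset> D" and below: "D \<subseteq> C" for D
  proof -
    have D: "subspace D" "u \<in> D" using D_ASU unfolding ASU_def by auto
    obtain w where w: "w \<in> D" "w \<notin> span {u}" using above by blast
    then have "w \<in> span {p, u - p}" using below C by blast
    then obtain s t where st: "w = s *\<^sub>R p + t *\<^sub>R (u - p)" unfolding mem_span_pair_iff by blast
    then have w_eq: "w = (s - t) *\<^sub>R p + t *\<^sub>R u" by (simp add: algebra_simps)
    have "s - t \<noteq> 0"
    proof
      assume "s - t = 0"
      then have "w = t *\<^sub>R u" using w_eq by simp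
      then show False using w(2) by (simp add: span_base span_scale)
    qed
    with w_eq have "p = (1 / (s - t)) *\<^sub>R (w - t *\<^sub>R u)" by simp
    then have "p \<in> D" using w D by (simp add: subspace_diff subspace_scale)
    then show ?thesis using D by (intro span_minimal) (auto simp: subspace_diff)
  qed
  ultimately show ?thesis unfolding is_atom_def using C_ASU C by blast
qed

end

section \<open>Atoms of \<open>ASU\<close>\<close>

locale ASU_atom = jb_assoc_subalgebra +
  assumes atom: "is_atom (ASU jp u) (span {u}) C"
begin

lemma span_unit_subset_C: "span {u} \<subseteq> C"
  using subspace_C by (intro span_minimal) auto

lemma C_neq_span_unit: "C \<noteq> span {u}"
  using atom unfolding is_atom_def by blast

lemma ASU_eq_C:
  assumes "D \<in> ASU jp u" "span {u} \<subseteq> D" "D \<subseteq> C" "D \<noteq> span {u}"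
  shows "D = C"
  using assms atom unfolding is_atom_def by blast

lemma unit_nonzero: "u \<noteq> 0"
proof -
  obtain x where "x \<in> C" "x \<notin> span {u}" using span_unit_subset_C C_neq_span_unit by blast
  then have "x \<noteq> 0" using span_zero by auto
  then show ?thesis by (rule nonzero_imp_unit_nonzero)
qed

lemma closed_ideal_eq_0_or_span:
  assumes N: "closed_ideal N" and u: "u \<notin> N"
  shows "N = {0} \<or> C = span (insert u N)"
proof (cases "span (insert u N) = span {u}")
  case True
  have "n = 0" if "n \<in> N" for n
  proof -
    have "n \<in> span {u}" using that True span_base[of n "insert u N"] by simp
    then obtain r where "n = r *\<^sub>R u" by (auto simp: span_singleton)
    then show "n = 0" using that u N scaleR_in_subspace_iff[of N u r] unfolding closed_ideal_def by auto
  qed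
  moreover have "0 \<in> N" using N subspace_0 unfolding closed_ideal_def by blast
  ultimately show ?thesis by blast
next
  case False
  have "span (insert u N) \<subseteq> C" using N subspace_C unfolding closed_ideal_def by (intro span_minimal) auto
  with False have "span (insert u N) = C"
    using span_insert_unit_ASU[OF N] span_mono[of "{u}" "insert u N"] by (intro ASU_eq_C) auto
  then show ?thesis by blast
qed

lemma exists_complement_ideal:
  assumes x: "x \<in> C" "norm x = 1" and "x \<odot> x \<noteq> u"
  shows "\<exists>N l. closed_ideal N \<and> u \<notin> N \<and> C = span (insert u N) \<and> l \<noteq> 0 \<and> x - l *\<^sub>R u \<in> N"
proof -
  define N where "N = jpow_vanishing (x \<odot> x)"
  have N: "closed_ideal N" unfolding N_def using x norm_square[of x] by (intro closed_ideal_jpow_vanishing) auto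
  then have N_sub: "subspace N" "N \<subseteq> C" and N_mult: "\<And>z w. z \<in> N \<Longrightarrow> w \<in> C \<Longrightarrow> z \<odot> w \<in> N"
    unfolding closed_ideal_def by auto
  have u: "u \<notin> N" unfolding N_def using unit_nonzero x by (rule unit_notin_jpow_vanishing)
  have ux: "u - x \<odot> x \<in> N" unfolding N_def using x by (intro unit_minus_square_in_jpow_vanishing) auto
  with \<open>x \<odot> x \<noteq> u\<close> have "N \<noteq> {0}" by auto
  then have C: "C = span (insert u N)" using closed_ideal_eq_0_or_span[OF N u] by blast
  obtain l where m: "x - l *\<^sub>R u \<in> N" using x(1) unfolding C mem_span_insert_subspace[OF N_sub(1)] by blast
  have "(1 - l * l) *\<^sub>R u
      = (u - x \<odot> x) + ((x - l *\<^sub>R u) \<odot> (x - l *\<^sub>R u) + (l *\<^sub>R (x - l *\<^sub>R u) + l *\<^sub>R (x - l *\<^sub>R u)))"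
    by (simp add: algebra_simps)
  also have "\<dots> \<in> N"
  proof -
    have "(x - l *\<^sub>R u) \<odot> (x - l *\<^sub>R u) \<in> N" using m N_sub(2) N_mult by blast
    then show ?thesis by (intro subspace_add[OF N_sub(1)] subspace_scale[OF N_sub(1)] ux m)
  qed
  finally have "1 - l * l = 0" using scaleR_in_subspace_iff[OF N_sub(1) u] by blast
  then have "l \<noteq> 0" by auto
  then show ?thesis using N u C m by blast
qed

lemma span_pair_eq_if_square_in_span:
  assumes a: "a \<in> C" "a \<notin> span {u}" and aa: "a \<odot> a \<in> span {a, u}"
  shows "C = span {a, u}"
proof -
  have sub: "span {a, u} \<subseteq> C" using a subspace_C by (intro span_minimal) auto
  have "span {a, u} \<in> ASU jp u"
  proof (rule ASU_if_subalgebra)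
    show "span {a, u} \<subseteq> C" by (rule sub)
    show "subspace (span {a, u})" by (rule subspace_span)
    show "closed (span {a, u})" by (rule closed_span_finite) simp
    show "u \<in> span {a, u}" by (simp add: span_base)
    fix x y assume "x \<in> span {a, u}" "y \<in> span {a, u}"
    then obtain s t s' t' where "x = s *\<^sub>R a + t *\<^sub>R u" "y = s' *\<^sub>R a + t' *\<^sub>R u"
      unfolding mem_span_pair_iff by blast
    then have "x \<odot> y = (s * s') *\<^sub>R (a \<odot> a) + ((s * t' + t * s') *\<^sub>R a + (t * t') *\<^sub>R u)"
      by (simp add: algebra_simps)
    then show "x \<odot> y \<in> span {a, u}" using aa by (simp add: span_add span_scale span_base)
  qed
  moreover have "span {u} \<subseteq> span {a, u}" by (rule span_mono) auto
  moreover have "span {a, u} \<noteq> span {u}" using a(2) span_base[of a "{a, u}"] by auto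
  ultimately show ?thesis using sub by (metis ASU_eq_C)
qed

text \<open>The ideal \<open>N2\<close> attached to \<open>z\<close> misses \<open>z\<close>, so \<open>N1 \<inter> N2\<close> cannot extend \<open>span {u}\<close> to
  all of \<open>C\<close>; hence \<open>N1 \<inter> N2 = {0}\<close> and \<open>C\<close> is two-dimensional.\<close>
lemma span_pair_eq_if_in_complement_ideal:
  assumes N1: "closed_ideal N1" "u \<notin> N1" "C = span (insert u N1)"
    and z: "z \<in> N1" "norm z = 1"
  shows "C = span {z, u}"
proof -
  have N1_sub: "subspace N1" "N1 \<subseteq> C" using N1(1) unfolding closed_ideal_def by auto
  have "z \<in> C" using z N1_sub by blast
  moreover have "z \<odot> z \<in> N1" using N1(1) z(1) \<open>z \<in> C\<close> unfolding closed_ideal_def by blast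
  then have "z \<odot> z \<noteq> u" using N1(2) by auto
  ultimately obtain N2 l where N2: "closed_ideal N2" "u \<notin> N2" "C = span (insert u N2)"
    and l: "l \<noteq> 0" "z - l *\<^sub>R u \<in> N2"
    using exists_complement_ideal z(2) by blast
  have N2_sub: "subspace N2" using N2(1) unfolding closed_ideal_def by auto
  have "z \<notin> N2"
  proof
    assume "z \<in> N2"
    then have "l *\<^sub>R u \<in> N2" using subspace_diff[OF N2_sub _ l(2)] by fastforce
    then show False using l(1) scaleR_in_subspace_iff[OF N2_sub N2(2)] by blast
  qed
  have "C \<noteq> span (insert u (N1 \<inter> N2))"
  proof
    assume C: "C = span (insert u (N1 \<inter> N2))"
    have K: "subspace (N1 \<inter> N2)" using N1_sub(1) N2_sub by (rule subspace_inter)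
    obtain t where t: "z - t *\<^sub>R u \<in> N1 \<inter> N2"
      using \<open>z \<in> C\<close> unfolding C mem_span_insert_subspace[OF K] by blast
    then have "t *\<^sub>R u \<in> N1" using subspace_diff[OF N1_sub(1) z(1)] by fastforce
    then have "t = 0" using scaleR_in_subspace_iff[OF N1_sub(1) N1(2)] by blast
    then show False using t \<open>z \<notin> N2\<close> by simp
  qed
  then have "N1 \<inter> N2 = {0}"
    using closed_ideal_eq_0_or_span[OF closed_ideal_Int[OF N1(1) N2(1)]] N1(2) by blast
  then show ?thesis
    using N1_sub(1) N2_sub N1(3) N2(3) z(1) l(2,1) by (intro span_pair_eq_if_complements_disjoint)
qed

lemma exists_element_square_in_span: "\<exists>a\<in>C. a \<notin> span {u} \<and> a \<odot> a \<in> span {a, u}"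
proof -
  obtain x0 where x0: "x0 \<in> C" "x0 \<notin> span {u}" using span_unit_subset_C C_neq_span_unit by blast
  then have "x0 \<noteq> 0" using span_zero by auto
  define x where "x = (1 / norm x0) *\<^sub>R x0"
  have x: "x \<in> C" "norm x = 1" unfolding x_def using x0 \<open>x0 \<noteq> 0\<close> by auto
  have "x0 = norm x0 *\<^sub>R x" unfolding x_def using \<open>x0 \<noteq> 0\<close> by simp
  then have "x \<notin> span {u}" using x0(2) by (metis span_scale)
  show ?thesis
  proof (cases "x \<odot> x = u")
    case True
    then show ?thesis using x \<open>x \<notin> span {u}\<close> by (intro bexI[of _ x]) (auto simp: span_base)
  next
    case False
    then obtain N l where N: "closed_ideal N" "u \<notin> N" "C = span (insert u N)" and l: "x - l *\<^sub>R u \<in> N"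
      using exists_complement_ideal x by blast
    have N_sub: "subspace N" "N \<subseteq> C" using N(1) unfolding closed_ideal_def by auto
    have "x - l *\<^sub>R u \<noteq> 0" using \<open>x \<notin> span {u}\<close> by (auto simp: span_base span_scale)
    define z where "z = (1 / norm (x - l *\<^sub>R u)) *\<^sub>R (x - l *\<^sub>R u)"
    have z: "z \<in> N" "norm z = 1" unfolding z_def using l N_sub(1) \<open>x - l *\<^sub>R u \<noteq> 0\<close>
      by (auto simp: subspace_scale)
    have "z \<notin> span {u}"
    proof
      assume "z \<in> span {u}"
      then obtain r where "z = r *\<^sub>R u" by (auto simp: span_singleton)
      then show False using z scaleR_in_subspace_iff[OF N_sub(1) N(2)] by auto
    qed
    moreover have "C = span {z, u}" using N z by (rule span_pair_eq_if_in_complement_ideal)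
    moreover have "z \<in> C" using z N_sub by blast
    ultimately show ?thesis using mult_in_C[of z z] by (intro bexI[of _ z]) auto
  qed
qed

lemma exists_projection: "\<exists>p. is_projection jp p \<and> p \<noteq> 0 \<and> p \<noteq> u \<and> C = span {p, u - p}"
proof -
  obtain a where a: "a \<in> C" "a \<notin> span {u}" "a \<odot> a \<in> span {a, u}"
    using exists_element_square_in_span by blast
  then have "C = span {a, u}" by (rule span_pair_eq_if_square_in_span)
  moreover obtain e where "e \<odot> e = u" "e \<notin> span {u}" "span {a, u} = span {e, u}"
    using span_eq_span_symmetry_if_square_in_span[OF a(2,3)] by blast
  ultimately show ?thesis using projection_of_symmetry by metis
qed

end

theorem lemma2p3:
  fixes jp :: "'a::banach \<Rightarrow> 'a \<Rightarrow> 'a"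
    and u :: 'a
    and T :: "'a \<Rightarrow> ('b::banach \<Rightarrow>\<^sub>L real)"
    and C :: "'a set"
  assumes "jb_algebra jp"
    and "is_unit jp u"
    and "dual_space_iso T"
    and "C \<in> ASU jp u"
  shows "is_atom (ASU jp u) (range (\<lambda>r. r *\<^sub>R u)) C \<longleftrightarrow>
         (\<exists>p. is_projection jp p \<and> p \<noteq> 0 \<and> p \<noteq> u \<and> C = span {p, u - p})"
proof -
  interpret jb_assoc_subalgebra jp u C
    using assms(1,2,4) by unfold_locales
  show ?thesis
    unfolding span_singleton[symmetric]
  proof
    assume "is_atom (ASU jp u) (span {u}) C"
    then interpret ASU_atom jp u C
      by unfold_locales
    show "\<exists>p. is_projection jp p \<and> p \<noteq> 0 \<and> p \<noteq> u \<and> C = span {p, u - p}"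
      by (rule exists_projection)
  qed (use atom_if_span_projection in blast)
qed

end
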